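(* Suppose Assumption B holds. Then $\gamma\left(\tfrac1n\mathbf 1\right)\ge\tfrac1n\gamma^*$, where $\mathbf 1$ is the all-ones vector in $\mathbb R^n$ and $\gamma^*=\sup_{\alpha\in\mathrm{relint}(\Omega)}\gamma(\alpha)$.
   Context: $V_S=\{1,\dots,n\}$ (supply locations), $V_D$ a finite set (demand locations), and a bipartite graph $G=(V_S\cup V_D,E)$. Write $\partial(j')=\{i\in V_S:(i,j')\in E\}$ and $\partial(J)=\bigcup_{j'\in J}\partial(j')$. The matrix $\phi=(\phi_{j'k})_{j'\in V_D,k\in V_S}$ is nonnegative with entries summing to $1$. $\Omega$ is the probability simplex in $\mathbb R^n$, and $\mathrm{relint}(\Omega)$ consists of its points with all coordinates positive. Assumption B: for every nonempty $J\subsetneq V_D$, $\sum_{i\in\partial(J)}\sum_{j'\in V_D}\phi_{j'i}>\sum_{j'\in J}\sum_{k\in V_S}\phi_{j'k}$. Define $\mathcal J=\{J\subsetneq V_D:\sum_{j'\in J}\sum_{k\notin\partial(J)}\phi_{j'k}>0\}$, $\lambda_J=\sum_{j'\notin J}\sum_{k\in\partial(J)}\phi_{j'k}$, $\mu_J=\sum_{j'\in J}\sum_{k\notin\partial(J)}\phi_{j'k}$, and for $\alpha\in\mathrm{relint}(\Omega)$, $$\gamma(\alpha)=\min_{J\in\mathcal J}\Big(\sum_{i\in\partial(J)}\alpha_i\Big)\log\frac{\lambda_J}{\mu_J}.$$ (This is the demand-drop exponent of the scaled MaxWeight policy with scaling vector $\alpha$; $\alpha=\frac1n\mathbf 1$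 corresponds to vanilla MaxWeight.) *)

theory Defs
  imports "HOL-Analysis.Analysis"
begin

text \<open>Supply locations are {1..n}; demand locations a finite set VD; edges
  E are pairs (supply i, demand j); phi j k is the entry for demand j, supply k.\<close>

definition nbr :: "nat \<Rightarrow> (nat \<times> 'd) set \<Rightarrow> 'd set \<Rightarrow> nat set" where
  "nbr n E J = {i \<in> {1..n}. \<exists>j\<in>J. (i, j) \<in> E}"

definition assumptionB :: "nat \<Rightarrow> 'd set \<Rightarrow> (nat \<times> 'd) set \<Rightarrow> ('d \<Rightarrow> nat \<Rightarrow> real) \<Rightarrow> bool" where
  "assumptionB n VD E phi \<longleftrightarrow>
     (\<forall>J. J \<noteq> {} \<and> J \<subset> VD \<longrightarrow>
        (\<Sum>i\<in>nbr n E J. \<Sum>j\<in>VD. phi j i) > (\<Sum>j\<in>J. \<Sum>k\<in>{1..n}. phi j k))"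

definition lam :: "nat \<Rightarrow> 'd set \<Rightarrow> (nat \<times> 'd) set \<Rightarrow> ('d \<Rightarrow> nat \<Rightarrow> real) \<Rightarrow> 'd set \<Rightarrow> real" where
  "lam n VD E phi J = (\<Sum>j\<in>VD - J. \<Sum>k\<in>nbr n E J. phi j k)"

definition mu :: "nat \<Rightarrow> 'd set \<Rightarrow> (nat \<times> 'd) set \<Rightarrow> ('d \<Rightarrow> nat \<Rightarrow> real) \<Rightarrow> 'd set \<Rightarrow> real" where
  "mu n VD E phi J = (\<Sum>j\<in>J. \<Sum>k\<in>{1..n} - nbr n E J. phi j k)"

definition calJ :: "nat \<Rightarrow> 'd set \<Rightarrow> (nat \<times> 'd) set \<Rightarrow> ('d \<Rightarrow> nat \<Rightarrow> real) \<Rightarrow> 'd set set" where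
  "calJ n VD E phi = {J. J \<subset> VD \<and> mu n VD E phi J > 0}"

text \<open>Minimum over calJ, taken in the extended reals (empty minimum = +infinity).\<close>
definition gamma :: "nat \<Rightarrow> 'd set \<Rightarrow> (nat \<times> 'd) set \<Rightarrow> ('d \<Rightarrow> nat \<Rightarrow> real) \<Rightarrow> (nat \<Rightarrow> real) \<Rightarrow> ereal" where
  "gamma n VD E phi \<alpha> =
     Inf ((\<lambda>J. ereal ((\<Sum>i\<in>nbr n E J. \<alpha> i) * ln (lam n VD E phi J / mu n VD E phi J)))
          ` calJ n VD E phi)"

definition relint_simplex :: "nat \<Rightarrow> (nat \<Rightarrow> real) set" where
  "relint_simplex n = {\<alpha>. (\<forall>i\<in>{1..n}. \<alpha> i > 0) \<and> (\<Sum>i\<in>{1..n}. \<alpha> i) = 1}"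

definition gamma_star :: "nat \<Rightarrow> 'd set \<Rightarrow> (nat \<times> 'd) set \<Rightarrow> ('d \<Rightarrow> nat \<Rightarrow> real) \<Rightarrow> ereal" where
  "gamma_star n VD E phi = Sup (gamma n VD E phi ` relint_simplex n)"

end

theory Submission
  imports Defs
begin

text \<open>For every J in calJ, Assumption B gives lam J > mu J, so the logarithmic factor
  of J is positive. Its weight is at most 1 under any alpha in the simplex, while under
  the uniform vector it is card (nbr J) / n \<ge> 1 / n because the neighbourhood of J is
  nonempty. Hence gamma alpha \<le> n * gamma (1/n) for every alpha, and taking the
  supremum gives the claim.\<close>

lemma nbr_subset_atLeastAtMost: "nbr n E J \<subseteq> {1..n}"
  by (auto simp: nbr_def)

lemma finite_nbr: "finite (nbr n E J)"
  by (simp add: nbr_def)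

lemma mu_less_lam:
  assumes "finite VD" and "assumptionB n VD E phi" and "J \<in> calJ n VD E phi"
  shows "mu n VD E phi J < lam n VD E phi J"
proof -
  let ?N = "nbr n E J"
  let ?inner = "\<Sum>j\<in>J. \<Sum>i\<in>?N. phi j i"
  have JV: "J \<subset> VD" and mu_pos: "mu n VD E phi J > 0"
    using assms(3) by (auto simp: calJ_def)
  have "J \<noteq> {}" using mu_pos by (auto simp: mu_def)
  then have B: "(\<Sum>i\<in>?N. \<Sum>j\<in>VD. phi j i) > (\<Sum>j\<in>J. \<Sum>k\<in>{1..n}. phi j k)"
    using assms(2) JV by (auto simp: assumptionB_def)
  have "(\<Sum>i\<in>?N. \<Sum>j\<in>VD. phi j i) = (\<Sum>j\<in>VD. \<Sum>i\<in>?N. phi j i)"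
    by (rule sum.swap)
  also have "\<dots> = ?inner + lam n VD E phi J"
    using JV assms(1) unfolding lam_def
    by (metis (no_types, lifting) psubset_imp_subset sum.subset_diff add.commute)
  finally have supply_side: "(\<Sum>i\<in>?N. \<Sum>j\<in>VD. phi j i) = ?inner + lam n VD E phi J" .
  have demand_side: "(\<Sum>j\<in>J. \<Sum>k\<in>{1..n}. phi j k) = ?inner + mu n VD E phi J"
    unfolding mu_def sum.distrib[symmetric]
    by (rule sum.cong[OF refl])
      (metis nbr_subset_atLeastAtMost finite_atLeastAtMost sum.subset_diff add.commute)
  show ?thesis using B supply_side demand_side by linarith
qed

lemma nbr_nonempty_if_in_calJ:
  assumes "finite VD" and "assumptionB n VD E phi" and "J \<in> calJ n VD E phi"
  shows "nbr n E J \<noteq> {}"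
proof
  assume "nbr n E J = {}"
  then have "lam n VD E phi J = 0" by (simp add: lam_def)
  moreover have "mu n VD E phi J > 0" using assms(3) by (simp add: calJ_def)
  ultimately show False using mu_less_lam[OF assms] by linarith
qed

lemma sum_nbr_le_one:
  assumes "\<alpha> \<in> relint_simplex n"
  shows "(\<Sum>i\<in>nbr n E J. \<alpha> i) \<le> 1"
proof -
  have "(\<Sum>i\<in>nbr n E J. \<alpha> i) \<le> (\<Sum>i\<in>{1..n}. \<alpha> i)"
    using assms nbr_subset_atLeastAtMost
    by (intro sum_mono2) (auto simp: relint_simplex_def less_imp_le)
  then show ?thesis using assms by (simp add: relint_simplex_def)
qed

lemma gamma_le_real_mult_gamma_uniform:
  assumes "finite VD" and "assumptionB n VD E phi" and "n > 0"
    and "\<alpha> \<in> relint_simplex n"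
  shows "gamma n VD E phi \<alpha> \<le> ereal (real n) * gamma n VD E phi (\<lambda>_. 1 / real n)"
proof -
  have "gamma n VD E phi \<alpha> / ereal (real n) \<le> gamma n VD E phi (\<lambda>_. 1 / real n)"
    unfolding gamma_def[of n VD E phi "\<lambda>_. 1 / real n"]
  proof (rule Inf_greatest, clarify)
    fix J assume J: "J \<in> calJ n VD E phi"
    define L where "L = ln (lam n VD E phi J / mu n VD E phi J)"
    have "mu n VD E phi J > 0" using J by (simp add: calJ_def)
    then have L_pos: "L > 0"
      unfolding L_def using mu_less_lam[OF assms(1,2) J] by simp
    have card_ge_1: "real (card (nbr n E J)) \<ge> 1"
      using nbr_nonempty_if_in_calJ[OF assms(1,2) J] finite_nbr
      by (simp add: Suc_le_eq card_gt_0_iff)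
    have "gamma n VD E phi \<alpha> \<le> ereal ((\<Sum>i\<in>nbr n E J. \<alpha> i) * L)"
      unfolding gamma_def L_def by (rule Inf_lower) (use J in auto)
    also have "\<dots> \<le> ereal (real (card (nbr n E J)) * L)"
      using sum_nbr_le_one[OF assms(4), of E J] card_ge_1 L_pos
      by (simp add: mult_right_mono)
    also have "\<dots> = ereal (real n) * ereal ((\<Sum>i\<in>nbr n E J. 1 / real n) * L)"
      using assms(3) by simp
    finally show "gamma n VD E phi \<alpha> / ereal (real n)
        \<le> ereal ((\<Sum>i\<in>nbr n E J. 1 / real n) * L)"
      using assms(3) by (subst ereal_divide_le_pos) auto
  qed
  then show ?thesis using assms(3) by (subst (asm) ereal_divide_le_pos) auto
qed

theorem proposition4:
  fixes n :: nat and VD :: "'d set" and E :: "(nat \<times> 'd) set"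
    and phi :: "'d \<Rightarrow> nat \<Rightarrow> real"
  assumes "finite VD"
    and "E \<subseteq> {1..n} \<times> VD"
    and "\<forall>j\<in>VD. \<forall>k\<in>{1..n}. phi j k \<ge> 0"
    and "(\<Sum>j\<in>VD. \<Sum>k\<in>{1..n}. phi j k) = 1"
    and "assumptionB n VD E phi"
  shows "gamma n VD E phi (\<lambda>_. 1 / real n) \<ge> gamma_star n VD E phi / ereal (real n)"
proof -
  have "n > 0" using assms(4) by (cases n) auto
  have "gamma_star n VD E phi \<le> ereal (real n) * gamma n VD E phi (\<lambda>_. 1 / real n)"
    unfolding gamma_star_def
    by (rule Sup_least)
      (auto intro: gamma_le_real_mult_gamma_uniform[OF assms(1,5) \<open>n > 0\<close>])
  then show ?thesis using \<open>n > 0\<close> by (subst ereal_divide_le_pos) auto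
qed

end
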